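(* Let $q\in\mathbb{N}^+$, let $G=(V,E)$ be a finite $(q+1)$-regular graph (multi-edges and loops allowed), let $\mathcal G$ be a subgroup of the unitary group $U(N)$, and let $\sigma$ be a $\mathcal G$-color on $G$. Then for every $r\in\mathbb{N}$, $$A^\sigma_r=q^{r/2}X_{r,q}(q^{-1/2}A^\sigma).$$
   Context: Each element of $E$ gives two distinct directed edges $e,\overline e$ (mutually inverse), forming $\vec E$, with origin $o(e)$ and terminus $t(e)$; $(q+1)$-regular means every vertex is the origin of exactly $q+1$ directed edges. A walk of length $n\ge1$ is a sequence of directed edges $e_1,\dots,e_n$ with $t(e_i)=o(e_{i+1})$; it is non-backtracking if $e_{i+1}\neq\overline{e_i}$ for all $i$. A $\mathcal G$-color is a map $\sigma:\vec E\to\mathcal G$ with $\sigma(\overline e)=\sigma(e)^{-1}$; the color of a walk $\gamma=(e_1,\dots,e_n)$ is $\sigma_\gamma=\sigma(e_1)\sigma(e_2)\cdots\sigma(e_n)$. $A^\sigma$ is the $N|V|\times N|V|$ block matrix with $N\times N$ blocks $(A^\sigma)_{ij}=\sum_{e\in\vec E: o(e)=i,t(e)=j}\sigma(e)$ (zero block if none). The colored non-backtracking matrix $A^\sigma_r$ is the block matrix with $(A^\sigma_r)_{ij}=\sum_{\gamma}\sigma_\gamma$, summed over all non-backtracking walks $\gamma$ of length $r$ from $i$ to $j$, for $r\ge1$, and $A^\sigma_0=I$. The polynomials $X_{r,q}$ are defined by $\sum_{r\ge0}X_{r,q}(x)t^r=\frac{1-q^{-1}t^2}{1-xt+t^2}$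 for $|t|$ small; explicitly $X_{r,q}=X_r-q^{-1}X_{r-2}$ with $X_r(x)=\sum_{0\le k\le r/2}(-1)^k\binom{r-k}{k}x^{r-2k}$ and $X_r\equiv0$ for $r<0$. *)

theory Defs
  imports "HOL-Analysis.Analysis" "HOL-Computational_Algebra.Polynomial"
begin

text \<open>A finite multigraph (loops and multi-edges allowed) given by its finite type
  'e of directed edges, origin/terminus maps to the vertex type 'v, and the
  fixed-point-free involution e \<mapsto> reversed edge.\<close>

definition multigraph :: "('e::finite \<Rightarrow> 'v::finite) \<Rightarrow> ('e \<Rightarrow> 'v) \<Rightarrow> ('e \<Rightarrow> 'e) \<Rightarrow> bool" where
  "multigraph org trm rv \<longleftrightarrow>
     (\<forall>e. rv (rv e) = e) \<and> (\<forall>e. rv e \<noteq> e) \<and> (\<forall>e. org (rv e) = trm e)"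

definition regular :: "nat \<Rightarrow> ('e::finite \<Rightarrow> 'v::finite) \<Rightarrow> bool" where
  "regular d org \<longleftrightarrow> (\<forall>v. card {e. org e = v} = d)"

definition cadj :: "complex^'n^'n \<Rightarrow> complex^'n^'n" where
  "cadj M = (\<chi> i j. cnj (M $ j $ i))"

definition unitary_mat :: "complex^'n^'n \<Rightarrow> bool" where
  "unitary_mat U \<longleftrightarrow> U ** cadj U = mat 1 \<and> cadj U ** U = mat 1"

definition subgroup_unitary :: "(complex^'n^'n) set \<Rightarrow> bool" where
  "subgroup_unitary \<G> \<longleftrightarrow> \<G> \<subseteq> {U. unitary_mat U} \<and> mat 1 \<in> \<G> \<and>
     (\<forall>A\<in>\<G>. \<forall>B\<in>\<G>. A ** B \<in> \<G>) \<and> (\<forall>A\<in>\<G>. matrix_inv A \<in> \<G>)"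

definition color :: "(complex^'n^'n) set \<Rightarrow> ('e \<Rightarrow> 'e) \<Rightarrow> ('e \<Rightarrow> complex^'n^'n) \<Rightarrow> bool" where
  "color \<G> rv \<sigma> \<longleftrightarrow> (\<forall>e. \<sigma> e \<in> \<G> \<and> \<sigma> (rv e) = matrix_inv (\<sigma> e))"

definition blockmat :: "('v::finite \<Rightarrow> 'v \<Rightarrow> complex^'n^'n) \<Rightarrow> complex^('v \<times> 'n)^('v \<times> 'n)" where
  "blockmat B = (\<chi> p p'. B (fst p) (fst p') $ snd p $ snd p')"

definition adj_colored :: "('e::finite \<Rightarrow> 'v::finite) \<Rightarrow> ('e \<Rightarrow> 'v) \<Rightarrow> ('e \<Rightarrow> complex^'n^'n)
     \<Rightarrow> complex^('v \<times> 'n)^('v \<times> 'n)" where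
  "adj_colored org trm \<sigma> = blockmat (\<lambda>i j. \<Sum>e\<in>{e. org e = i \<and> trm e = j}. \<sigma> e)"

definition nb_walks :: "('e \<Rightarrow> 'v) \<Rightarrow> ('e \<Rightarrow> 'v) \<Rightarrow> ('e \<Rightarrow> 'e) \<Rightarrow> nat \<Rightarrow> 'v \<Rightarrow> 'v \<Rightarrow> 'e list set" where
  "nb_walks org trm rv r i j = {\<gamma>. length \<gamma> = r \<and> \<gamma> \<noteq> [] \<and>
      org (hd \<gamma>) = i \<and> trm (last \<gamma>) = j \<and>
      (\<forall>k. Suc k < r \<longrightarrow> trm (\<gamma> ! k) = org (\<gamma> ! Suc k) \<and> \<gamma> ! Suc k \<noteq> rv (\<gamma> ! k))}"

definition walk_color :: "('e \<Rightarrow> complex^'n^'n) \<Rightarrow> 'e list \<Rightarrow> complex^'n^'n" where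
  "walk_color \<sigma> \<gamma> = foldr (\<lambda>e M. \<sigma> e ** M) \<gamma> (mat 1)"

definition nb_colored :: "('e::finite \<Rightarrow> 'v::finite) \<Rightarrow> ('e \<Rightarrow> 'v) \<Rightarrow> ('e \<Rightarrow> 'e) \<Rightarrow> ('e \<Rightarrow> complex^'n^'n)
     \<Rightarrow> nat \<Rightarrow> complex^('v \<times> 'n)^('v \<times> 'n)" where
  "nb_colored org trm rv \<sigma> r =
     (if r = 0 then mat 1
      else blockmat (\<lambda>i j. \<Sum>\<gamma>\<in>nb_walks org trm rv r i j. walk_color \<sigma> \<gamma>))"

definition Xpoly :: "int \<Rightarrow> real poly" where
  "Xpoly r = (if r < 0 then 0 else
     (\<Sum>k\<in>{k. 2 * k \<le> nat r}. monom ((-1) ^ k * real ((nat r - k) choose k)) (nat r - 2 * k)))"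

definition Xpoly_q :: "nat \<Rightarrow> nat \<Rightarrow> real poly" where
  "Xpoly_q r q = Xpoly (int r) - smult (1 / real q) (Xpoly (int r - 2))"

primrec mpow :: "'a::semiring_1^'m^'m \<Rightarrow> nat \<Rightarrow> 'a^'m^'m" where
  "mpow M 0 = mat 1"
| "mpow M (Suc n) = M ** mpow M n"

definition poly_mat :: "real poly \<Rightarrow> complex^'m^'m \<Rightarrow> complex^'m^'m" where
  "poly_mat p M = (\<Sum>i\<le>degree p. coeff p i *\<^sub>R mpow M i)"

end

theory Submission
  imports Defs
begin

(* Both sides satisfy the same three-term recurrence.  Prepending an edge e to a non-backtracking
  walk d of length r gives all walks counted by A^sigma_{r+1}, plus the walks that backtrack at
  the first step, d = rev e # d'.  By unitarity sigma(e) sigma(rev e) = 1, so such a walk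
  contributes the color of d', and every non-backtracking d' of length r - 1 from i arises from
  exactly the q edges e <> hd d' leaving i (from all q + 1 of them when r = 1 and d' is empty).
  Hence A^sigma A^sigma_r = A^sigma_{r+1} + q A^sigma_{r-1}, with q + 1 in place of q for r = 1.
  The Chebyshev-type recurrence X_{r+1} = x X_r - X_{r-1} gives the same recurrence for
  q^{r/2} X_{r,q}(q^{-1/2} A^sigma), and both sides agree for r = 0 and r = 1. *)

lemma matrix_mul_sum_right: "(A::'a::comm_semiring_1^'m^'k) ** sum f S = (\<Sum>x\<in>S. A ** f x)"
  by (simp add: vec_eq_iff matrix_matrix_mult_def sum_distrib_left sum_component; subst sum.swap; simp)

lemma matrix_mul_sum_left: "sum f S ** (B::'a::comm_semiring_1^'m^'k) = (\<Sum>x\<in>S. f x ** B)"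
  by (simp add: vec_eq_iff matrix_matrix_mult_def sum_distrib_right sum_component; subst sum.swap; simp)

lemma matrix_mul_scaleR_right: "(A::'a::real_algebra_1^'m^'k) ** (c *\<^sub>R B) = c *\<^sub>R (A ** B)"
  by (simp add: matrix_scalar_ac scalar_matrix_assoc)

lemma matrix_inv_right: "invertible A \<Longrightarrow> A ** matrix_inv A = mat 1"
  unfolding invertible_def matrix_inv_def by (rule someI2_ex) auto

lemma unitary_mat_invertible: "unitary_mat U \<Longrightarrow> invertible U"
  unfolding unitary_mat_def invertible_def by blast

lemma color_mult_reverse:
  assumes "subgroup_unitary \<G>" and "color \<G> rv \<sigma>"
  shows "\<sigma> e ** \<sigma> (rv e) = mat 1"
  using assms unitary_mat_invertible matrix_inv_right
  unfolding subgroup_unitary_def color_def by auto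

lemma blockmat_mult: "blockmat B ** blockmat C = blockmat (\<lambda>i j. \<Sum>k\<in>UNIV. B i k ** C k j)"
proof -
  have "(\<Sum>p\<in>UNIV. B i (fst p) $ a $ snd p * C (fst p) j $ snd p $ b)
     = (\<Sum>k\<in>UNIV. \<Sum>c\<in>UNIV. B i k $ a $ c * C k j $ c $ b)" for i a j b
    by (simp add: UNIV_Times_UNIV[symmetric] sum.cartesian_product split_beta del: UNIV_Times_UNIV)
  then show ?thesis
    by (simp add: blockmat_def vec_eq_iff matrix_matrix_mult_def sum_component)
qed

lemma blockmat_add: "blockmat (\<lambda>i j. B i j + C i j) = blockmat B + blockmat C"
  by (simp add: blockmat_def vec_eq_iff)

lemma blockmat_scaleR: "blockmat (\<lambda>i j. c *\<^sub>R B i j) = c *\<^sub>R blockmat B"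
  by (simp add: blockmat_def vec_eq_iff)

lemma mat_1_eq_blockmat: "mat 1 = blockmat (\<lambda>i j. if i = j then mat 1 else 0)"
  by (auto simp add: blockmat_def vec_eq_iff mat_def prod_eq_iff)

lemma poly_mat_eq_sum:
  assumes "degree p \<le> n"
  shows "poly_mat p M = (\<Sum>i\<le>n. coeff p i *\<^sub>R mpow M i)"
  unfolding poly_mat_def
  by (rule sum.mono_neutral_left) (use assms in \<open>auto simp: coeff_eq_0\<close>)

lemma poly_mat_0 [simp]: "poly_mat 0 M = 0"
  by (simp add: poly_mat_def)

lemma poly_mat_add: "poly_mat (p + q) M = poly_mat p M + poly_mat q M"
proof -
  define n where "n = max (degree p) (degree q)"
  have "degree (p + q) \<le> n"
    unfolding n_def by (rule degree_add_le_max)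
  then show ?thesis
    using poly_mat_eq_sum[of p n M] poly_mat_eq_sum[of q n M] poly_mat_eq_sum[of "p + q" n M]
    by (simp add: n_def scaleR_add_left sum.distrib)
qed

lemma poly_mat_smult: "poly_mat (smult c p) M = c *\<^sub>R poly_mat p M"
  using poly_mat_eq_sum[OF degree_smult_le, of c p M]
  by (simp add: poly_mat_def scaleR_sum_right)

lemma poly_mat_pCons: "poly_mat (pCons a p) M = a *\<^sub>R mat 1 + M ** poly_mat p M"
proof -
  have "poly_mat (pCons a p) M = (\<Sum>i\<le>Suc (degree p). coeff (pCons a p) i *\<^sub>R mpow M i)"
    by (rule poly_mat_eq_sum) (simp add: degree_pCons_le)
  also have "\<dots> = a *\<^sub>R mat 1 + (\<Sum>i\<le>degree p. coeff p i *\<^sub>R (M ** mpow M i))"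
    by (simp add: sum.atMost_Suc_shift del: sum.atMost_Suc)
  also have "\<dots> = a *\<^sub>R mat 1 + M ** poly_mat p M"
    by (simp add: poly_mat_def matrix_mul_sum_right matrix_mul_scaleR_right)
  finally show ?thesis .
qed

lemma poly_mat_1: "poly_mat 1 M = mat 1"
  using poly_mat_pCons[of 1 0 M] by (simp add: one_pCons)

lemma poly_mat_pCons_0: "poly_mat (pCons 0 p) M = M ** poly_mat p M"
  by (simp add: poly_mat_pCons)

definition Xcoeff :: "nat \<Rightarrow> nat \<Rightarrow> real" where
  "Xcoeff m k = (-1) ^ k * real ((m - k) choose k)"

lemma Xcoeff_eq_0: "m < 2 * k \<Longrightarrow> Xcoeff m k = 0"
  by (simp add: Xcoeff_def)

lemma Xcoeff_Suc_Suc: "Xcoeff (Suc (Suc m)) (Suc k) = Xcoeff (Suc m) (Suc k) - Xcoeff m k"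
proof (cases "k \<le> m")
  case True
  then have "Suc (Suc m) - Suc k = Suc (m - k)" "Suc m - Suc k = m - k" by auto
  then show ?thesis by (simp add: Xcoeff_def algebra_simps)
qed (simp add: Xcoeff_def)

lemma Xpoly_eq_sum:
  assumes "m \<le> 2 * n"
  shows "Xpoly (int m) = (\<Sum>k\<le>n. monom (Xcoeff m k) (m - 2 * k))"
proof -
  have "Xpoly (int m) = (\<Sum>k\<in>{k. 2 * k \<le> m}. monom (Xcoeff m k) (m - 2 * k))"
    by (simp add: Xpoly_def Xcoeff_def)
  also have "\<dots> = (\<Sum>k\<le>n. monom (Xcoeff m k) (m - 2 * k))"
    by (rule sum.mono_neutral_left) (use assms Xcoeff_eq_0 in auto)
  finally show ?thesis .
qed

lemma Xpoly_Suc_Suc: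
  "Xpoly (int (m + 2)) = pCons 0 (Xpoly (int (m + 1))) - Xpoly (int m)"
proof -
  have x_mult: "pCons 0 p = monom 1 1 * p" for p :: "real poly"
    by (simp add: monom_Suc)
  have shift: "monom 1 1 * monom (Xcoeff (m + 1) k) (m + 1 - 2 * k) =
      monom (Xcoeff (m + 1) k) (m + 2 - 2 * k)" for k
    by (cases "m + 1 < 2 * k") (auto simp: Xcoeff_eq_0 mult_monom Suc_diff_le)
  have "pCons 0 (Xpoly (int (m + 1))) =
      monom 1 1 * (\<Sum>k\<le>m + 1. monom (Xcoeff (m + 1) k) (m + 1 - 2 * k))"
    using Xpoly_eq_sum[of "m + 1" "m + 1"] x_mult by simp
  also have "\<dots> = (\<Sum>k\<le>m + 1. monom (Xcoeff (m + 1) k) (m + 2 - 2 * k))"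
    unfolding sum_distrib_left shift ..
  also have "\<dots> = monom 1 (m + 2) + (\<Sum>k\<le>m. monom (Xcoeff (m + 1) (Suc k)) (m - 2 * k))"
    by (simp add: sum.atMost_Suc_shift Xcoeff_def del: sum.atMost_Suc)
  also have "(\<Sum>k\<le>m. monom (Xcoeff (m + 1) (Suc k)) (m - 2 * k)) =
      (\<Sum>k\<le>m. monom (Xcoeff (m + 2) (Suc k)) (m - 2 * k)) + Xpoly (int m)"
    by (simp add: Xpoly_eq_sum[of m m] Xcoeff_Suc_Suc diff_monom[symmetric] sum_subtractf)
  finally have "pCons 0 (Xpoly (int (m + 1))) - Xpoly (int m) =
      monom 1 (m + 2) + (\<Sum>k\<le>m. monom (Xcoeff (m + 2) (Suc k)) (m - 2 * k))"
    by simp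
  also have "\<dots> = Xpoly (int (m + 2))"
    using Xpoly_eq_sum[of "m + 2" "m + 1"]
    by (simp add: sum.atMost_Suc_shift Xcoeff_def del: sum.atMost_Suc)
  finally show ?thesis by simp
qed

lemma Xpoly_neg: "r < 0 \<Longrightarrow> Xpoly r = 0"
  by (simp add: Xpoly_def)

lemma Xpoly_0: "Xpoly 0 = 1"
  using Xpoly_eq_sum[of 0 0] by (simp add: Xcoeff_def)

lemma Xpoly_1: "Xpoly 1 = pCons 0 1"
  using Xpoly_eq_sum[of 1 1] by (simp add: Xcoeff_def monom_Suc)

lemma pCons_0_Xpoly: "pCons 0 (Xpoly (int m)) = Xpoly (int m + 1) + Xpoly (int m - 1)"
proof (cases m)
  case 0
  then show ?thesis by (simp add: Xpoly_0 Xpoly_1 Xpoly_neg)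
next
  case (Suc k)
  then show ?thesis using Xpoly_Suc_Suc[of k] by (simp add: add.commute)
qed

lemma Xpoly_q_0: "Xpoly_q 0 q = 1"
  by (simp add: Xpoly_q_def Xpoly_0 Xpoly_neg)

lemma Xpoly_q_1: "Xpoly_q 1 q = pCons 0 1"
  by (simp add: Xpoly_q_def Xpoly_1 Xpoly_neg)

lemma pCons_0_Xpoly_q:
  "pCons 0 (Xpoly_q (Suc r) q) =
     Xpoly_q (r + 2) q + smult (if r = 0 then 1 + 1 / real q else 1) (Xpoly_q r q)"
proof (cases r)
  case 0
  then show ?thesis
    using pCons_0_Xpoly[of 1] by (simp add: Xpoly_q_def Xpoly_0 Xpoly_1 Xpoly_neg)
next
  case (Suc s)
  have "pCons 0 (Xpoly_q (Suc r) q) =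
      pCons 0 (Xpoly (int (s + 2))) - smult (1 / real q) (pCons 0 (Xpoly (int s)))"
    using Suc by (simp add: Xpoly_q_def)
  also have "\<dots> = Xpoly_q (r + 2) q + Xpoly_q r q"
    unfolding pCons_0_Xpoly using Suc
    by (simp add: Xpoly_q_def smult_add_right algebra_simps)
  finally show ?thesis using Suc by simp
qed

lemma scaled_Xpoly_q_recurrence:
  fixes M :: "complex^'m^'m"
  assumes "q \<ge> 1"
  defines "P \<equiv> \<lambda>r. sqrt (real q) ^ r *\<^sub>R poly_mat (Xpoly_q r q) ((1 / sqrt (real q)) *\<^sub>R M)"
  shows "P 0 = mat 1" and "P 1 = M"
    and "M ** P (Suc r) = P (r + 2) + real (if r = 0 then q + 1 else q) *\<^sub>R P r"
proof -
  define s where "s = sqrt (real q)"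
  define M' where "M' = (1 / s) *\<^sub>R M"
  have "s > 0" using assms(1) by (simp add: s_def)
  then have M: "M = s *\<^sub>R M'" by (simp add: M'_def)
  have P: "P r = s ^ r *\<^sub>R poly_mat (Xpoly_q r q) M'" for r
    by (simp add: P_def s_def M'_def)
  show "P 0 = mat 1"
    by (simp add: P Xpoly_q_0 poly_mat_1)
  show "P 1 = M"
    unfolding P Xpoly_q_1 poly_mat_pCons_0 poly_mat_1 M by simp
  define c where "c = (if r = 0 then 1 + 1 / real q else 1)"
  have scale: "s ^ (r + 2) * c = real (if r = 0 then q + 1 else q) * s ^ r"
    using assms(1) by (simp add: s_def c_def power_add field_simps)
  have "M ** P (Suc r) = s ^ (r + 2) *\<^sub>R poly_mat (pCons 0 (Xpoly_q (Suc r) q)) M'"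
    by (simp add: P M poly_mat_pCons_0 matrix_mul_scaleR_right scalar_matrix_assoc[symmetric])
  also have "\<dots> = s ^ (r + 2) *\<^sub>R poly_mat (Xpoly_q (r + 2) q) M' +
      (s ^ (r + 2) * c) *\<^sub>R poly_mat (Xpoly_q r q) M'"
    by (simp add: pCons_0_Xpoly_q c_def poly_mat_add poly_mat_smult scaleR_add_right)
  also have "\<dots> = P (r + 2) + real (if r = 0 then q + 1 else q) *\<^sub>R P r"
    unfolding scale by (simp add: P)
  finally show "M ** P (Suc r) = P (r + 2) + real (if r = 0 then q + 1 else q) *\<^sub>R P r" .
qed

lemma second_order_recurrence_unique:
  assumes "f 0 = g 0" and "f 1 = g 1"
    and "\<And>r. f (r + 2) = h r (f (Suc r)) (f r)"
    and "\<And>r. g (r + 2) = h r (g (Suc r)) (g r)"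
  shows "f n = g n"
proof -
  have "f n = g n \<and> f (Suc n) = g (Suc n)"
    by (induction n) (use assms in \<open>simp_all add: numeral_2_eq_2\<close>)
  then show ?thesis ..
qed

lemma walk_color_Nil [simp]: "walk_color \<sigma> [] = mat 1"
  by (simp add: walk_color_def)

lemma walk_color_Cons [simp]: "walk_color \<sigma> (e # \<gamma>) = \<sigma> e ** walk_color \<sigma> \<gamma>"
  by (simp add: walk_color_def)

lemma finite_nb_walks: "finite (nb_walks (org :: 'e::finite \<Rightarrow> 'v) trm rv r i j)"
proof -
  have "nb_walks org trm rv r i j \<subseteq> {\<gamma>. set \<gamma> \<subseteq> UNIV \<and> length \<gamma> = r}"
    unfolding nb_walks_def by auto
  then show ?thesis
    using finite_lists_length_eq[of "UNIV :: 'e set" r] finite_subset by auto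
qed

lemma nb_walks_1: "nb_walks org trm rv 1 i j = (\<lambda>e. [e]) ` {e. org e = i \<and> trm e = j}"
proof -
  have "length \<gamma> = 1 \<longleftrightarrow> (\<exists>e. \<gamma> = [e])" for \<gamma> :: "'e list"
    by (cases \<gamma>) auto
  then show ?thesis
    unfolding nb_walks_def by auto
qed

lemma Cons_mem_nb_walks_Suc:
  assumes "r \<ge> 1"
  shows "e # \<delta> \<in> nb_walks org trm rv (Suc r) i j \<longleftrightarrow>
    org e = i \<and> \<delta> \<in> nb_walks org trm rv r (trm e) j \<and> hd \<delta> \<noteq> rv e"
proof -
  have split: "(\<forall>k. Suc k < Suc r \<longrightarrow> P k) \<longleftrightarrow> P 0 \<and> (\<forall>k. Suc k < r \<longrightarrow> P (Suc k))" for P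
    using assms by (cases r) (simp_all add: All_less_Suc2)
  have "length \<delta> = r \<Longrightarrow> \<delta> \<noteq> []"
    using assms by auto
  then show ?thesis
    unfolding nb_walks_def mem_Collect_eq split by (auto simp: hd_conv_nth)
qed

lemma nb_walks_Suc:
  assumes "r \<ge> 1"
  shows "nb_walks org trm rv (Suc r) i j = (\<lambda>(e, \<delta>). e # \<delta>) `
    (SIGMA e:{e. org e = i}. {\<delta> \<in> nb_walks org trm rv r (trm e) j. hd \<delta> \<noteq> rv e})"
proof -
  have "\<gamma> \<noteq> []" if "\<gamma> \<in> nb_walks org trm rv (Suc r) i j" for \<gamma>
    using that by (simp add: nb_walks_def)
  then show ?thesis
    using Cons_mem_nb_walks_Suc[OF assms] by (fastforce simp: image_iff neq_Nil_conv)
qed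

definition nb_block :: "('e::finite \<Rightarrow> 'v::finite) \<Rightarrow> ('e \<Rightarrow> 'v) \<Rightarrow> ('e \<Rightarrow> 'e) \<Rightarrow>
    ('e \<Rightarrow> complex^'n^'n) \<Rightarrow> nat \<Rightarrow> 'v \<Rightarrow> 'v \<Rightarrow> complex^'n^'n" where
  "nb_block org trm rv \<sigma> r i j = (\<Sum>\<gamma>\<in>nb_walks org trm rv r i j. walk_color \<sigma> \<gamma>)"

definition adj_block :: "('e::finite \<Rightarrow> 'v::finite) \<Rightarrow> ('e \<Rightarrow> 'v) \<Rightarrow> ('e \<Rightarrow> complex^'n^'n) \<Rightarrow>
    'v \<Rightarrow> 'v \<Rightarrow> complex^'n^'n" where
  "adj_block org trm \<sigma> i j = (\<Sum>e | org e = i \<and> trm e = j. \<sigma> e)"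

definition first_backtrack_block :: "('e::finite \<Rightarrow> 'v::finite) \<Rightarrow> ('e \<Rightarrow> 'v) \<Rightarrow> ('e \<Rightarrow> 'e) \<Rightarrow>
    ('e \<Rightarrow> complex^'n^'n) \<Rightarrow> nat \<Rightarrow> 'v \<Rightarrow> 'v \<Rightarrow> complex^'n^'n" where
  "first_backtrack_block org trm rv \<sigma> r i j =
     (\<Sum>e | org e = i. \<Sum>\<delta> | \<delta> \<in> nb_walks org trm rv r (trm e) j \<and> hd \<delta> = rv e.
        \<sigma> e ** walk_color \<sigma> \<delta>)"

lemma nb_colored_eq_blockmat: "r \<ge> 1 \<Longrightarrow> nb_colored org trm rv \<sigma> r = blockmat (nb_block org trm rv \<sigma> r)"
  unfolding nb_colored_def nb_block_def[abs_def] by simp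

lemma adj_colored_eq_blockmat: "adj_colored org trm \<sigma> = blockmat (adj_block org trm \<sigma>)"
  unfolding adj_colored_def adj_block_def[abs_def] ..

lemma nb_block_1: "nb_block org trm rv \<sigma> 1 = adj_block org trm \<sigma>"
  unfolding nb_block_def[abs_def] adj_block_def[abs_def] nb_walks_1
  by (auto simp: sum.reindex inj_on_def)

lemma adj_block_mult:
  "(\<Sum>k\<in>UNIV. adj_block org trm \<sigma> i k ** M k) = (\<Sum>e | org e = i. \<sigma> e ** M (trm e))"
proof -
  have "(\<Sum>k\<in>UNIV. adj_block org trm \<sigma> i k ** M k) =
      (\<Sum>k\<in>UNIV. \<Sum>e | e \<in> {e. org e = i} \<and> trm e = k. \<sigma> e ** M (trm e))"
    unfolding adj_block_def matrix_mul_sum_left by (intro sum.cong) auto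
  also have "\<dots> = (\<Sum>e | org e = i. \<sigma> e ** M (trm e))"
    by (rule sum.group) auto
  finally show ?thesis .
qed

lemma adj_block_mult_nb_block:
  assumes "r \<ge> 1"
  shows "(\<Sum>k\<in>UNIV. adj_block org trm \<sigma> i k ** nb_block org trm rv \<sigma> r k j) =
    nb_block org trm rv \<sigma> (Suc r) i j + first_backtrack_block org trm rv \<sigma> r i j"
proof -
  have "nb_block org trm rv \<sigma> (Suc r) i j = (\<Sum>e | org e = i.
      \<Sum>\<delta> | \<delta> \<in> nb_walks org trm rv r (trm e) j \<and> hd \<delta> \<noteq> rv e. \<sigma> e ** walk_color \<sigma> \<delta>)"
    unfolding nb_block_def nb_walks_Suc[OF assms]
    by (subst sum.reindex) (auto simp: inj_on_def sum.Sigma finite_nb_walks split_beta)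
  moreover have "\<sigma> e ** nb_block org trm rv \<sigma> r (trm e) j =
      (\<Sum>\<delta> | \<delta> \<in> nb_walks org trm rv r (trm e) j \<and> hd \<delta> \<noteq> rv e. \<sigma> e ** walk_color \<sigma> \<delta>) +
      (\<Sum>\<delta> | \<delta> \<in> nb_walks org trm rv r (trm e) j \<and> hd \<delta> = rv e. \<sigma> e ** walk_color \<sigma> \<delta>)" for e
    unfolding nb_block_def matrix_mul_sum_right
    by (subst sum.union_disjoint[symmetric]) (auto simp: finite_nb_walks intro: sum.cong)
  ultimately show ?thesis
    by (simp add: adj_block_mult first_backtrack_block_def sum.distrib)
qed

lemma multigraph_reverse:
  assumes "multigraph org trm rv"
  shows "rv (rv e) = e" and "org (rv e) = trm e" and "trm (rv e) = org e"
  using assms unfolding multigraph_def by metis+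

lemma first_backtrack_block_1:
  assumes graph: "multigraph org trm rv" and reg: "regular (q + 1) org"
    and inv: "\<And>e. \<sigma> e ** \<sigma> (rv e) = mat 1"
  shows "first_backtrack_block org trm rv \<sigma> 1 i j = (if i = j then real (q + 1) *\<^sub>R mat 1 else 0)"
proof -
  have walks: "{\<delta>. \<delta> \<in> nb_walks org trm rv 1 (trm e) j \<and> hd \<delta> = rv e} =
      (if org e = j then {[rv e]} else {})" for e
    unfolding nb_walks_1 using multigraph_reverse[OF graph] by (auto simp: image_iff)
  have "first_backtrack_block org trm rv \<sigma> 1 i j = (\<Sum>e | org e = i. if i = j then mat 1 else 0)"
    unfolding first_backtrack_block_def walks by (intro sum.cong) (auto simp: inv)
  also have "\<dots> = (if i = j then real (q + 1) *\<^sub>R mat 1 else 0)"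
    using reg by (simp add: regular_def sum_constant_scaleR del: sum_constant)
  finally show ?thesis .
qed

lemma first_backtrack_block_Suc:
  assumes graph: "multigraph org trm rv" and reg: "regular (q + 1) org"
    and inv: "\<And>e. \<sigma> e ** \<sigma> (rv e) = mat 1" and "s \<ge> 1"
  shows "first_backtrack_block org trm rv \<sigma> (Suc s) i j = real q *\<^sub>R nb_block org trm rv \<sigma> s i j"
proof -
  note rv = multigraph_reverse[OF graph]
  have walks: "{\<delta>. \<delta> \<in> nb_walks org trm rv (Suc s) (trm e) j \<and> hd \<delta> = rv e} =
      Cons (rv e) ` {\<delta>. \<delta> \<in> nb_walks org trm rv s (org e) j \<and> hd \<delta> \<noteq> e}" for e
  proof -
    have "\<gamma> \<noteq> []" if "\<gamma> \<in> nb_walks org trm rv (Suc s) (trm e) j" for \<gamma>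
      using that by (simp add: nb_walks_def)
    then show ?thesis
      using Cons_mem_nb_walks_Suc[OF \<open>s \<ge> 1\<close>, of "rv e" _ org trm rv "trm e" j]
      by (fastforce simp: rv image_iff neq_Nil_conv)
  qed
  have cancel: "(\<Sum>\<delta> | \<delta> \<in> nb_walks org trm rv (Suc s) (trm e) j \<and> hd \<delta> = rv e.
      \<sigma> e ** walk_color \<sigma> \<delta>) =
    (\<Sum>\<delta> | \<delta> \<in> nb_walks org trm rv s (org e) j \<and> hd \<delta> \<noteq> e. walk_color \<sigma> \<delta>)" for e
    unfolding walks by (simp add: sum.reindex matrix_mul_assoc inv)
  have "first_backtrack_block org trm rv \<sigma> (Suc s) i j =
      (\<Sum>e | org e = i. \<Sum>\<delta> | \<delta> \<in> nb_walks org trm rv s i j \<and> hd \<delta> \<noteq> e. walk_color \<sigma> \<delta>)"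
    unfolding first_backtrack_block_def cancel by (rule sum.cong) auto
  also have "\<dots> = (\<Sum>\<delta>\<in>nb_walks org trm rv s i j. \<Sum>e | org e = i \<and> hd \<delta> \<noteq> e. walk_color \<sigma> \<delta>)"
    using sum.swap_restrict[of "{e. org e = i}" "nb_walks org trm rv s i j"
        "\<lambda>e \<delta>. walk_color \<sigma> \<delta>" "\<lambda>e \<delta>. hd \<delta> \<noteq> e"]
    by (simp add: finite_nb_walks conj_commute)
  also have "\<dots> = (\<Sum>\<delta>\<in>nb_walks org trm rv s i j. real q *\<^sub>R walk_color \<sigma> \<delta>)"
  proof (intro sum.cong refl)
    fix \<delta> assume "\<delta> \<in> nb_walks org trm rv s i j"
    then have "org (hd \<delta>) = i"
      by (simp add: nb_walks_def)
    moreover have "{e. org e = i \<and> hd \<delta> \<noteq> e} = {e. org e = i} - {hd \<delta>}"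
      by auto
    ultimately have "card {e. org e = i \<and> hd \<delta> \<noteq> e} = q"
      using reg by (simp add: regular_def card_Diff_singleton_if)
    then show "(\<Sum>e | org e = i \<and> hd \<delta> \<noteq> e. walk_color \<sigma> \<delta>) = real q *\<^sub>R walk_color \<sigma> \<delta>"
      by (simp add: sum_constant_scaleR del: sum_constant)
  qed
  also have "\<dots> = real q *\<^sub>R nb_block org trm rv \<sigma> s i j"
    by (simp add: nb_block_def scaleR_sum_right)
  finally show ?thesis .
qed

lemma blockmat_first_backtrack_block:
  assumes "multigraph org trm rv" and "regular (q + 1) org"
    and "\<And>e. \<sigma> e ** \<sigma> (rv e) = mat 1"
  shows "blockmat (first_backtrack_block org trm rv \<sigma> (Suc r)) =
    real (if r = 0 then q + 1 else q) *\<^sub>R nb_colored org trm rv \<sigma> r"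
proof (cases "r = 0")
  case True
  have "first_backtrack_block org trm rv \<sigma> 1 = (\<lambda>i j. real (q + 1) *\<^sub>R (if i = j then mat 1 else 0))"
    using first_backtrack_block_1[where \<sigma> = \<sigma>, OF assms] by (intro ext) simp
  then show ?thesis
    using True by (simp add: nb_colored_def mat_1_eq_blockmat blockmat_scaleR)
next
  case False
  then have "first_backtrack_block org trm rv \<sigma> (Suc r) = (\<lambda>i j. real q *\<^sub>R nb_block org trm rv \<sigma> r i j)"
    using first_backtrack_block_Suc[where \<sigma> = \<sigma> and s = r, OF assms] by (intro ext) simp
  then show ?thesis
    using False by (simp add: nb_colored_eq_blockmat blockmat_scaleR)
qed

lemma adj_colored_mult_nb_colored:
  assumes "multigraph org trm rv" and "regular (q + 1) org"
    and "\<And>e. \<sigma> e ** \<sigma> (rv e) = mat 1"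
  shows "adj_colored org trm \<sigma> ** nb_colored org trm rv \<sigma> (Suc r) =
    nb_colored org trm rv \<sigma> (r + 2) + real (if r = 0 then q + 1 else q) *\<^sub>R nb_colored org trm rv \<sigma> r"
proof -
  have "adj_colored org trm \<sigma> ** nb_colored org trm rv \<sigma> (Suc r) =
      blockmat (\<lambda>i j. nb_block org trm rv \<sigma> (r + 2) i j + first_backtrack_block org trm rv \<sigma> (Suc r) i j)"
    by (simp add: adj_colored_eq_blockmat nb_colored_eq_blockmat blockmat_mult adj_block_mult_nb_block)
  then show ?thesis
    unfolding blockmat_add blockmat_first_backtrack_block[where \<sigma> = \<sigma>, OF assms]
    by (simp add: nb_colored_eq_blockmat)
qed

lemma nb_colored_0: "nb_colored org trm rv \<sigma> 0 = mat 1"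
  by (simp add: nb_colored_def)

lemma nb_colored_1: "nb_colored org trm rv \<sigma> 1 = adj_colored org trm \<sigma>"
  unfolding nb_colored_eq_blockmat[OF order_refl] nb_block_1 adj_colored_eq_blockmat ..

theorem lemma3p1:
  fixes q :: nat
    and org trm :: "'e::finite \<Rightarrow> 'v::finite"
    and rv :: "'e \<Rightarrow> 'e"
    and \<G> :: "(complex^'n^'n) set"
    and \<sigma> :: "'e \<Rightarrow> complex^'n^'n"
    and r :: nat
  assumes "q \<ge> 1"
    and "multigraph org trm rv"
    and "regular (q + 1) org"
    and "subgroup_unitary \<G>"
    and "color \<G> rv \<sigma>"
  shows "nb_colored org trm rv \<sigma> r =
    (sqrt (real q) ^ r) *\<^sub>R poly_mat (Xpoly_q r q) ((1 / sqrt (real q)) *\<^sub>R adj_colored org trm \<sigma>)"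
proof -
  define A where "A = adj_colored org trm \<sigma>"
  define P where "P r = sqrt (real q) ^ r *\<^sub>R poly_mat (Xpoly_q r q) ((1 / sqrt (real q)) *\<^sub>R A)" for r
  define c :: "nat \<Rightarrow> real" where "c r = real (if r = 0 then q + 1 else q)" for r
  note P_rec = scaled_Xpoly_q_recurrence[OF assms(1), of A, folded P_def]
  have N_rec: "A ** nb_colored org trm rv \<sigma> (Suc k) = nb_colored org trm rv \<sigma> (k + 2) +
      c k *\<^sub>R nb_colored org trm rv \<sigma> k" for k
    unfolding A_def c_def
    by (rule adj_colored_mult_nb_colored[where \<sigma> = \<sigma>, OF assms(2,3) color_mult_reverse[OF assms(4,5)]])
  have "nb_colored org trm rv \<sigma> r = P r"
  proof (rule second_order_recurrence_unique[where h = "\<lambda>k X Y. A ** X - c k *\<^sub>R Y"])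
    show "nb_colored org trm rv \<sigma> 0 = P 0"
      unfolding nb_colored_0 P_rec(1) ..
    show "nb_colored org trm rv \<sigma> 1 = P 1"
      unfolding nb_colored_1 P_rec(2) A_def ..
  qed (simp_all add: N_rec P_rec(3) c_def)
  then show ?thesis
    by (simp add: P_def A_def)
qed

end
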